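(* Suppose the matrix $A=D_\mu(I-\gamma P)$ has at least one non-real eigenvalue. Then there exists a differentiable function approximator $V:\mathbb{R}^d\to\mathbb{R}^n$ such that the TD dynamics $\dot\theta=-\nabla V(\theta)^T A\,(V(\theta)-V^* )$ diverge: for any initial parameters $\theta_0$, $\Vert V(\theta(t))-V^*\Vert\to\infty$ as $t\to\infty$. Moreover, such a $V$ can be chosen so that $\nabla V(\theta)$ has rank $n-1$ for all $\theta$.
   Context: A Markov reward process has finite state space with $n$ states, transition matrix $P$ defining an irreducible, aperiodic Markov chain with stationary distribution $\mu$, a finite reward function $r(s,s')$, and discount factor $\gamma\in[0,1)$. Let $R(s)=\mathbb{E}_{s'\sim P(\cdot|s)}[r(s,s')]$ and $V^*\in\mathbb{R}^n$ the unique solution of $V^*=R+\gamma PV^*$. $D_\mu=\mathrm{diag}(\mu)$. $\nabla V(\theta)$ is the $n\times d$ Jacobian of $V$. *)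

theory Defs
  imports "HOL-Analysis.Analysis"
begin

fun mpow :: "real^'n^'n \<Rightarrow> nat \<Rightarrow> real^'n^'n" where
  "mpow P 0 = mat 1"
| "mpow P (Suc k) = P ** mpow P k"

definition stochastic :: "real^'n^'n \<Rightarrow> bool" where
  "stochastic P \<longleftrightarrow> (\<forall>i j. P$i$j \<ge> 0) \<and> (\<forall>i. (\<Sum>j\<in>UNIV. P$i$j) = 1)"

definition irreducible_chain :: "real^'n^'n \<Rightarrow> bool" where
  "irreducible_chain P \<longleftrightarrow> (\<forall>i j. \<exists>k. mpow P k $ i $ j > 0)"

definition period :: "real^'n^'n \<Rightarrow> 'n \<Rightarrow> nat" where
  "period P i = Gcd {k. k \<ge> 1 \<and> mpow P k $ i $ i > 0}"

definition aperiodic_chain :: "real^'n^'n \<Rightarrow> bool" where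
  "aperiodic_chain P \<longleftrightarrow> (\<forall>i. period P i = 1)"

definition stationary_distribution :: "real^'n^'n \<Rightarrow> real^'n \<Rightarrow> bool" where
  "stationary_distribution P \<mu> \<longleftrightarrow>
     (\<forall>i. \<mu>$i \<ge> 0) \<and> (\<Sum>i\<in>UNIV. \<mu>$i) = 1 \<and> \<mu> v* P = \<mu>"

definition diag_mat :: "real^'n \<Rightarrow> real^'n^'n" where
  "diag_mat v = (\<chi> i j. if i = j then v$i else 0)"

definition cmat :: "real^'n^'m \<Rightarrow> complex^'n^'m" where
  "cmat A = (\<chi> i j. complex_of_real (A$i$j))"

definition is_eigenvalue :: "real^'n^'n \<Rightarrow> complex \<Rightarrow> bool" where
  "is_eigenvalue A c \<longleftrightarrow> (\<exists>v::complex^'n. v \<noteq> 0 \<and> cmat A *v v = c *s v)"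

definition exp_reward :: "real^'n^'n \<Rightarrow> ('n \<Rightarrow> 'n \<Rightarrow> real) \<Rightarrow> real^'n" where
  "exp_reward P r = (\<chi> s. \<Sum>s'\<in>UNIV. P$s$s' * r s s')"

definition td_field :: "real^'n^'n \<Rightarrow> real^'n \<Rightarrow> (real^'d \<Rightarrow> real^'n)
     \<Rightarrow> (real^'d \<Rightarrow> real^'d \<Rightarrow> real^'n) \<Rightarrow> real^'d \<Rightarrow> real^'d" where
  "td_field A Vs V V' \<theta> = - (transpose (matrix (V' \<theta>)) *v (A *v (V \<theta> - Vs)))"

end

theory Submission
  imports Defs
begin

(*
  A = D_mu (I - gamma P) is positive definite: mu > 0 by irreducibility, and P is a contraction
  for the mu-weighted norm.  A non-real eigenvalue of A is also one of A^T, so A^T leaves a plane U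
  invariant on which the skew part of the form x . A y does not vanish; in a suitable basis f1, f2
  of U this form has matrix [[1, k], [-k, 1]] with k <> 0.  For a unit vector e1 in U put
  V(y) = V* + G(e1 . y) + Q y, where Q is the orthogonal projection onto the complement of U and
  G(s) = e^s (cos phi(s) f1 + sin phi(s) f2) is a spiral turning just fast enough that
  G'(s) . A G(s) = -1.  As A maps the complement of U into itself, the TD field moves e1 . y at
  unit speed, so along every trajectory ||V - V*|| >= ||G(s0 + t)|| grows like e^t; the other
  coordinates follow a linear inhomogeneous ODE, which has global solutions.  The range of the
  Jacobian is the hyperplane orthogonal to G'(s) turned by a right angle inside U, so its rank
  is n - 1.  Parameters beyond the first n are absorbed by a matrix M with M M^T = I.
*)

section \<open>Linear inhomogeneous ODEs\<close>

lemma has_integral_power_from_0: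
  assumes "0 \<le> t"
  shows "((\<lambda>\<tau>::real. \<tau> ^ m) has_integral t ^ Suc m / Suc m) {0..t}"
proof -
  have "((\<lambda>\<tau>::real. \<tau> ^ m) has_integral t ^ Suc m / Suc m - 0 ^ Suc m / Suc m) {0..t}"
  proof (intro fundamental_theorem_of_calculus assms ballI)
    fix x :: real
    have "((\<lambda>x. x ^ Suc m / Suc m) has_real_derivative x ^ m) (at x)"
      by (rule derivative_eq_intros refl | simp del: of_nat_Suc)+
    then show "((\<lambda>x. x ^ Suc m / Suc m) has_vector_derivative x ^ m) (at x within {0..t})"
      by (simp add: has_real_derivative_iff_has_vector_derivative has_vector_derivative_at_within)
  qed
  then show ?thesis by simp
qed

primrec picard_iterate :: "('a::banach \<Rightarrow> 'a) \<Rightarrow> (real \<Rightarrow> 'a) \<Rightarrow> 'a \<Rightarrow> nat \<Rightarrow> real \<Rightarrow> 'a" where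
  "picard_iterate K f y0 0 = (\<lambda>t. y0)"
| "picard_iterate K f y0 (Suc m) = (\<lambda>t. y0 + integral {0..t} (\<lambda>\<tau>. K (picard_iterate K f y0 m \<tau>) + f \<tau>))"

definition picard_limit :: "('a::banach \<Rightarrow> 'a) \<Rightarrow> (real \<Rightarrow> 'a) \<Rightarrow> 'a \<Rightarrow> real \<Rightarrow> 'a" where
  "picard_limit K f y0 t = y0 + (\<Sum>i. picard_iterate K f y0 (Suc i) t - picard_iterate K f y0 i t)"

context
  fixes K :: "'a::banach \<Rightarrow> 'a" and f :: "real \<Rightarrow> 'a" and y0 :: 'a
  assumes K: "bounded_linear K" and f: "continuous_on UNIV f"
begin

lemma continuous_on_picard_iterate: "continuous_on {0..T} (picard_iterate K f y0 m)"
proof (induction m arbitrary: T)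
  case 0
  then show ?case by simp
next
  case (Suc m)
  have "continuous_on {0..T} (\<lambda>\<tau>. K (picard_iterate K f y0 m \<tau>) + f \<tau>)"
    by (intro continuous_intros bounded_linear.continuous_on[OF K] Suc continuous_on_subset[OF f]) auto
  then have "continuous_on {0..T} (\<lambda>t. integral {0..t} (\<lambda>\<tau>. K (picard_iterate K f y0 m \<tau>) + f \<tau>))"
    by (intro indefinite_integral_continuous_1 integrable_continuous_real)
  then show ?case by (simp add: continuous_intros)
qed

lemma integrable_picard_integrand:
  "(\<lambda>\<tau>. K (picard_iterate K f y0 m \<tau>) + f \<tau>) integrable_on {0..t}"
  by (intro integrable_continuous_real continuous_intros bounded_linear.continuous_on[OF K]
      continuous_on_picard_iterate continuous_on_subset[OF f]) auto

lemma norm_picard_iterate_diff_le: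
  assumes L: "\<And>x. norm (K x) \<le> L * norm x" "0 < L"
    and B: "\<And>t. t \<in> {0..T} \<Longrightarrow> norm (picard_iterate K f y0 1 t - y0) \<le> B"
    and t: "t \<in> {0..T}"
  shows "norm (picard_iterate K f y0 (Suc m) t - picard_iterate K f y0 m t) \<le> B * (L * t) ^ m / fact m"
  using t
proof (induction m arbitrary: t)
  case 0
  then show ?case using B by simp
next
  case (Suc m)
  let ?p = "picard_iterate K f y0" and ?c = "L * B * L ^ m / fact m"
  have "integral {0..t} (\<lambda>\<tau>. K (?p (Suc m) \<tau> - ?p m \<tau>)) =
      integral {0..t} (\<lambda>\<tau>. K (?p (Suc m) \<tau>) + f \<tau>) - integral {0..t} (\<lambda>\<tau>. K (?p m \<tau>) + f \<tau>)"
    by (simp add: integral_diff[OF integrable_picard_integrand integrable_picard_integrand, symmetric]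
        linear_diff[OF bounded_linear.linear[OF K]] del: picard_iterate.simps)
  also have "\<dots> = ?p (Suc (Suc m)) t - ?p (Suc m) t"
    by simp
  finally have step: "?p (Suc (Suc m)) t - ?p (Suc m) t = integral {0..t} (\<lambda>\<tau>. K (?p (Suc m) \<tau> - ?p m \<tau>))" ..
  have hi: "((\<lambda>\<tau>. ?c * \<tau> ^ m) has_integral ?c * (t ^ Suc m / Suc m)) {0..t}"
    using Suc.prems by (intro has_integral_mult_right has_integral_power_from_0) auto
  have "norm (integral {0..t} (\<lambda>\<tau>. K (?p (Suc m) \<tau> - ?p m \<tau>))) \<le> integral {0..t} (\<lambda>\<tau>. ?c * \<tau> ^ m)"
  proof (rule integral_norm_bound_integral)
    show "(\<lambda>\<tau>. K (?p (Suc m) \<tau> - ?p m \<tau>)) integrable_on {0..t}"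
      by (intro integrable_continuous_real continuous_intros bounded_linear.continuous_on[OF K]
          continuous_on_picard_iterate)
    show "(\<lambda>\<tau>. ?c * \<tau> ^ m) integrable_on {0..t}"
      using hi by blast
    fix x assume x: "x \<in> {0..t}"
    have "norm (K (?p (Suc m) x - ?p m x)) \<le> L * norm (?p (Suc m) x - ?p m x)" by (rule L)
    also have "\<dots> \<le> L * (B * (L * x) ^ m / fact m)"
      using Suc.IH[of x] x Suc.prems L(2) by (intro mult_left_mono) auto
    also have "\<dots> = ?c * x ^ m" by (simp add: power_mult_distrib)
    finally show "norm (K (?p (Suc m) x - ?p m x)) \<le> ?c * x ^ m" .
  qed
  also have "\<dots> = B * (L * t) ^ Suc m / fact (Suc m)"
    using integral_unique[OF hi] by (simp add: power_mult_distrib field_simps del: of_nat_Suc)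
  finally show ?case using step by simp
qed

lemma uniform_limit_picard_iterate:
  assumes "0 \<le> T"
  shows "uniform_limit {0..T} (picard_iterate K f y0) (picard_limit K f y0) sequentially"
proof -
  let ?p = "picard_iterate K f y0"
  have telescope: "?p m t = y0 + (\<Sum>i<m. ?p (Suc i) t - ?p i t)" for m t
    by (induction m) (simp_all del: picard_iterate.simps(2))
  obtain L where L: "0 < L" "\<And>x. norm (K x) \<le> L * norm x"
    using bounded_linear.pos_bounded[OF K] by (auto simp: mult.commute)
  have "bounded ((\<lambda>t. ?p 1 t - y0) ` {0..T})"
    by (intro compact_imp_bounded compact_continuous_image continuous_on_diff
        continuous_on_picard_iterate continuous_on_const compact_Icc)
  then obtain B where B: "\<And>t. t \<in> {0..T} \<Longrightarrow> norm (?p 1 t - y0) \<le> B"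
    by (meson bounded_iff image_eqI)
  have "0 \<le> B"
    using B[of 0] assms norm_ge_zero order_trans by fastforce
  have "norm (?p (Suc i) t - ?p i t) \<le> B * (L * T) ^ i / fact i" if "t \<in> {0..T}" for i t
  proof -
    have "(L * t) ^ i \<le> (L * T) ^ i"
      using that L(1) by (intro power_mono mult_left_mono) auto
    then have "B * (L * t) ^ i / fact i \<le> B * (L * T) ^ i / fact i"
      using \<open>0 \<le> B\<close> by (intro divide_right_mono mult_left_mono) auto
    then show ?thesis
      using norm_picard_iterate_diff_le[OF L(2,1) B that, of i] by linarith
  qed
  moreover have "summable (\<lambda>i. B * (L * T) ^ i / fact i)"
    using summable_mult[OF summable_exp[of "L * T"], of B] by (simp add: field_simps)
  ultimately have "uniform_limit {0..T} (\<lambda>m t. \<Sum>i<m. ?p (Suc i) t - ?p i t)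
      (\<lambda>t. \<Sum>i. ?p (Suc i) t - ?p i t) sequentially"
    by (rule Weierstrass_m_test)
  then have "uniform_limit {0..T} (\<lambda>m t. y0 + (\<Sum>i<m. ?p (Suc i) t - ?p i t)) (picard_limit K f y0)
      sequentially"
    unfolding picard_limit_def by (intro uniform_limit_intros)
  then show ?thesis
    unfolding telescope[symmetric] .
qed

lemma continuous_on_picard_limit: "0 \<le> T \<Longrightarrow> continuous_on {0..T} (picard_limit K f y0)"
  by (rule uniform_limit_theorem[OF _ uniform_limit_picard_iterate])
     (auto intro!: always_eventually continuous_on_picard_iterate)

lemma picard_limit_integral_equation:
  assumes "0 \<le> t"
  shows "picard_limit K f y0 t = y0 + integral {0..t} (\<lambda>\<tau>. K (picard_limit K f y0 \<tau>) + f \<tau>)"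
proof -
  let ?p = "picard_iterate K f y0" and ?Y = "picard_limit K f y0"
  have "uniform_limit {0..t} (\<lambda>m \<tau>. K (?p m \<tau>) + f \<tau>) (\<lambda>\<tau>. K (?Y \<tau>) + f \<tau>) sequentially"
    by (intro uniform_limit_intros bounded_linear.uniform_limit[OF K uniform_limit_picard_iterate[OF assms]])
  then obtain I J where I: "\<And>m. ((\<lambda>\<tau>. K (?p m \<tau>) + f \<tau>) has_integral I m) {0..t}"
    and J: "((\<lambda>\<tau>. K (?Y \<tau>) + f \<tau>) has_integral J) {0..t}" and "I \<longlonglongrightarrow> J"
    by (rule uniform_limit_integral)
       (auto intro!: continuous_intros bounded_linear.continuous_on[OF K]
         continuous_on_picard_iterate continuous_on_subset[OF f])
  then have "(\<lambda>m. ?p (Suc m) t) \<longlonglongrightarrow> y0 + J"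
    using integral_unique[OF I] by (simp add: tendsto_add)
  moreover have "(\<lambda>m. ?p (Suc m) t) \<longlonglongrightarrow> ?Y t"
    using LIMSEQ_Suc[OF tendsto_uniform_limitI[OF uniform_limit_picard_iterate[OF assms]]] assms
    by simp
  ultimately show ?thesis
    using LIMSEQ_unique integral_unique[OF J] by metis
qed

lemma linear_ode_solution_exists:
  "\<exists>y. y 0 = y0 \<and> (\<forall>t\<ge>0. (y has_vector_derivative K (y t) + f t) (at t within {0..}))"
proof (intro exI conjI allI impI)
  let ?Y = "picard_limit K f y0"
  show "?Y 0 = y0"
    using picard_limit_integral_equation[of 0] by simp
  fix t :: real
  assume "0 \<le> t"
  have "continuous_on {0..t+1} (\<lambda>\<tau>. K (?Y \<tau>) + f \<tau>)"
    using \<open>0 \<le> t\<close> by (intro continuous_intros bounded_linear.continuous_on[OF K]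
        continuous_on_picard_limit continuous_on_subset[OF f]) auto
  then have "((\<lambda>u. y0 + integral {0..u} (\<lambda>\<tau>. K (?Y \<tau>) + f \<tau>)) has_vector_derivative K (?Y t) + f t)
      (at t within {0..t+1})"
    using \<open>0 \<le> t\<close> by (auto intro!: derivative_eq_intros integral_has_vector_derivative)
  then have "(?Y has_vector_derivative K (?Y t) + f t) (at t within {0..t+1})"
    by (rule has_vector_derivative_transform_within[where d=1])
       (use \<open>0 \<le> t\<close> picard_limit_integral_equation in auto)
  moreover have "at t within {0..t+1} = at t within {0..}"
    by (rule at_within_nhd[of t "{..<t+1}"]) auto
  ultimately show "(?Y has_vector_derivative K (?Y t) + f t) (at t within {0..})"
    by simp
qed

end

lemma has_vector_derivative_const_imp_affine:
  fixes h :: "real \<Rightarrow> 'a::real_normed_vector"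
  assumes "\<And>t. 0 \<le> t \<Longrightarrow> (h has_vector_derivative c) (at t within {0..})" and "0 \<le> t"
  shows "h t = h 0 + t *\<^sub>R c"
proof -
  obtain k where "\<And>t. t \<in> {0..} \<Longrightarrow> h t - t *\<^sub>R c = k"
  proof (rule has_vector_derivative_zero_constant)
    show "((\<lambda>t. h t - t *\<^sub>R c) has_vector_derivative 0) (at t within {0..})" if "t \<in> {0..}" for t
      using assms(1)[of t] that by (auto intro!: derivative_eq_intros)
  qed auto
  from this[of t] this[of 0] show ?thesis
    using assms(2) by (simp add: algebra_simps)
qed

section \<open>The TD matrix of a Markov chain\<close>

lemma mpow_nonneg: "stochastic P \<Longrightarrow> 0 \<le> mpow P k $ i $ j"
  by (induction k arbitrary: i j)
     (auto simp: mat_def matrix_matrix_mult_def stochastic_def intro!: sum_nonneg)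

lemma stationary_distribution_mpow: "stationary_distribution P \<mu> \<Longrightarrow> \<mu> v* mpow P k = \<mu>"
  by (induction k) (simp_all add: stationary_distribution_def vector_matrix_mul_assoc[symmetric])

lemma stationary_distribution_pos:
  assumes "stochastic P" and "irreducible_chain P" and \<mu>: "stationary_distribution P \<mu>"
  shows "0 < \<mu> $ j"
proof (rule ccontr)
  assume "\<not> 0 < \<mu> $ j"
  then have "\<mu> $ j = 0"
    using \<mu> unfolding stationary_distribution_def by (metis less_eq_real_def)
  have "\<mu> $ i = 0" for i
  proof -
    obtain k where k: "0 < mpow P k $ i $ j"
      using assms(2) by (auto simp: irreducible_chain_def)
    have "mpow P k $ i $ j * \<mu> $ i \<le> (\<Sum>l\<in>UNIV. mpow P k $ l $ j * \<mu> $ l)"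
      using \<mu> by (intro member_le_sum) (auto simp: mpow_nonneg[OF assms(1)] stationary_distribution_def)
    also have "\<dots> = (\<mu> v* mpow P k) $ j"
      by (simp add: vector_matrix_mult_def mult.commute)
    also have "\<dots> = 0"
      using \<open>\<mu> $ j = 0\<close> stationary_distribution_mpow[OF \<mu>] by simp
    finally show ?thesis
      using k \<mu> by (simp add: stationary_distribution_def mult_le_0_iff order.antisym)
  qed
  then show False
    using \<mu> by (simp add: stationary_distribution_def)
qed

lemma diag_mat_mult_vector: "diag_mat d *v x = (\<chi> i. d $ i * x $ i)"
  by (simp add: diag_mat_def matrix_vector_mult_def vec_eq_iff if_distrib[where f="\<lambda>a. a * _"] cong: if_cong)

lemma stationary_cross_term_le:
  assumes "stochastic P" and "stationary_distribution P \<mu>"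
  shows "(\<Sum>i\<in>UNIV. \<mu> $ i * x $ i * (P *v x) $ i) \<le> (\<Sum>i\<in>UNIV. \<mu> $ i * (x $ i)\<^sup>2)"
proof -
  have rows: "(\<Sum>j\<in>UNIV. P $ i $ j) = 1" for i
    using assms(1) by (simp add: stochastic_def)
  have columns: "(\<Sum>i\<in>UNIV. \<mu> $ i * P $ i $ j) = \<mu> $ j" for j
    using arg_cong[where f="\<lambda>v. v $ j", OF stationary_distribution_mpow[OF assms(2), of 1]]
    by (simp add: vector_matrix_mult_def mult.commute)
  have weights: "0 \<le> \<mu> $ i * P $ i $ j" for i j
    using assms by (simp add: stochastic_def stationary_distribution_def)
  have "(\<Sum>i\<in>UNIV. \<mu> $ i * x $ i * (P *v x) $ i) = (\<Sum>i\<in>UNIV. \<Sum>j\<in>UNIV. \<mu> $ i * P $ i $ j * (x $ i * x $ j))"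
    by (simp add: matrix_vector_mult_def sum_distrib_left mult_ac)
  also have "\<dots> \<le> (\<Sum>i\<in>UNIV. \<Sum>j\<in>UNIV. \<mu> $ i * P $ i $ j * (((x $ i)\<^sup>2 + (x $ j)\<^sup>2) / 2))"
    using sum_squares_bound by (intro sum_mono mult_left_mono weights) (simp add: field_simps)
  also have "\<dots> = (\<Sum>i\<in>UNIV. \<Sum>j\<in>UNIV. \<mu> $ i * P $ i $ j * (x $ i)\<^sup>2) / 2 +
      (\<Sum>i\<in>UNIV. \<Sum>j\<in>UNIV. \<mu> $ i * P $ i $ j * (x $ j)\<^sup>2) / 2"
    by (simp add: sum.distrib add_divide_distrib sum_divide_distrib distrib_left)
  also have "(\<Sum>i\<in>UNIV. \<Sum>j\<in>UNIV. \<mu> $ i * P $ i $ j * (x $ i)\<^sup>2) = (\<Sum>i\<in>UNIV. \<mu> $ i * (x $ i)\<^sup>2)"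
    by (simp add: mult.assoc sum_distrib_left[symmetric] sum_distrib_right[symmetric] rows)
  also have "(\<Sum>i\<in>UNIV. \<Sum>j\<in>UNIV. \<mu> $ i * P $ i $ j * (x $ j)\<^sup>2) = (\<Sum>j\<in>UNIV. \<mu> $ j * (x $ j)\<^sup>2)"
    by (subst sum.swap) (simp add: sum_distrib_right[symmetric] columns)
  finally show ?thesis by simp
qed

lemma td_matrix_pos_def:
  assumes "stochastic P" and "irreducible_chain P" and "stationary_distribution P \<mu>"
    and "0 \<le> \<gamma>" and "\<gamma> < 1" and "x \<noteq> 0"
  shows "0 < inner x ((diag_mat \<mu> ** (mat 1 - \<gamma> *\<^sub>R P)) *v x)"
proof -
  let ?S = "\<Sum>i\<in>UNIV. \<mu> $ i * (x $ i)\<^sup>2"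
  have "0 < ?S"
  proof -
    obtain i where "x $ i \<noteq> 0"
      using assms(6) by (auto simp: vec_eq_iff)
    then have "0 < \<mu> $ i * (x $ i)\<^sup>2"
      using stationary_distribution_pos[OF assms(1-3)] by simp
    also have "\<dots> \<le> ?S"
      using stationary_distribution_pos[OF assms(1-3)] by (intro member_le_sum) (simp_all add: less_imp_le)
    finally show ?thesis .
  qed
  then have "0 < (1 - \<gamma>) * ?S"
    using assms(5) by simp
  also have "\<dots> \<le> ?S - \<gamma> * (\<Sum>i\<in>UNIV. \<mu> $ i * x $ i * (P *v x) $ i)"
    using mult_left_mono[OF stationary_cross_term_le[OF assms(1,3), of x] assms(4)] by (simp add: algebra_simps)
  also have "\<dots> = inner x ((diag_mat \<mu> ** (mat 1 - \<gamma> *\<^sub>R P)) *v x)"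
    by (simp add: matrix_vector_mul_assoc[symmetric] matrix_vector_mult_diff_rdistrib
        scaleR_matrix_vector_assoc[symmetric] diag_mat_mult_vector inner_vec_def algebra_simps
        power2_eq_square sum_subtractf sum_distrib_left)
  finally show ?thesis .
qed

section \<open>Invariant planes of non-real eigenvalues\<close>

lemma mat_mult_vector: "mat c *v x = c *s (x :: 'a::comm_ring_1 ^ 'n)"
  by (simp add: mat_def matrix_vector_mult_def vec_eq_iff if_distrib[where f="\<lambda>a. a * _"] cong: if_cong)

lemma det_eq_0_iff_nontrivial_kernel:
  fixes M :: "'a::field ^ 'n ^ 'n"
  shows "det M = 0 \<longleftrightarrow> (\<exists>x. x \<noteq> 0 \<and> M *v x = 0)"
  by (metis invertible_det_nz invertible_left_inverse matrix_left_invertible_ker)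

lemma is_eigenvalue_iff_det: "is_eigenvalue A c \<longleftrightarrow> det (cmat A - mat c) = 0"
  by (simp add: is_eigenvalue_def det_eq_0_iff_nontrivial_kernel matrix_vector_mult_diff_rdistrib
      mat_mult_vector)

lemma is_eigenvalue_transpose: "is_eigenvalue (transpose A) c \<longleftrightarrow> is_eigenvalue A c"
proof -
  have "cmat (transpose A) - mat c = transpose (cmat A - mat c)"
    by (simp add: vec_eq_iff transpose_def cmat_def mat_def)
  then show ?thesis
    by (simp add: is_eigenvalue_iff_det)
qed

lemma is_eigenvalue_real_plane:
  assumes "is_eigenvalue A c"
  obtains u v where "A *v u = Re c *\<^sub>R u - Im c *\<^sub>R v" and "A *v v = Im c *\<^sub>R u + Re c *\<^sub>R v"
    and "u \<noteq> 0 \<or> v \<noteq> 0"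
proof -
  obtain z where "z \<noteq> 0" and z: "cmat A *v z = c *s z"
    using assms by (auto simp: is_eigenvalue_def)
  define u where "u = (\<chi> k. Re (z $ k))"
  define v where "v = (\<chi> k. Im (z $ k))"
  have components: "(\<Sum>j\<in>UNIV. complex_of_real (A $ k $ j) * z $ j) = c * z $ k" for k
    using z by (simp add: vec_eq_iff matrix_vector_mult_def cmat_def)
  have "A *v u = Re c *\<^sub>R u - Im c *\<^sub>R v"
    using arg_cong[OF components, of Re]
    by (simp add: vec_eq_iff u_def v_def matrix_vector_mult_def Re_sum)
  moreover have "A *v v = Im c *\<^sub>R u + Re c *\<^sub>R v"
    using arg_cong[OF components, of Im]
    by (simp add: vec_eq_iff u_def v_def matrix_vector_mult_def Im_sum)
  moreover have "u \<noteq> 0 \<or> v \<noteq> 0"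
    using \<open>z \<noteq> 0\<close> by (auto simp: u_def v_def vec_eq_iff complex_eq_iff)
  ultimately show ?thesis using that by blast
qed

lemma span_pair_iff: "x \<in> span {a, b} \<longleftrightarrow> (\<exists>\<alpha> \<beta>. x = \<alpha> *\<^sub>R a + \<beta> *\<^sub>R b)"
  unfolding span_breakdown_eq span_singleton
  by (metis (no_types, lifting) add_diff_cancel_left' diff_add_cancel rangeE rangeI add.commute)

lemma span_pair_invariant:
  fixes B :: "real^'n^'n"
  assumes "B *v u \<in> span {u, v}" and "B *v v \<in> span {u, v}" and "x \<in> span {u, v}"
  shows "B *v x \<in> span {u, v}"
proof -
  obtain \<alpha> \<beta> where "x = \<alpha> *\<^sub>R u + \<beta> *\<^sub>R v"
    using assms(3) unfolding span_pair_iff by blast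
  then have "B *v x = \<alpha> *\<^sub>R (B *v u) + \<beta> *\<^sub>R (B *v v)"
    by (simp add: matrix_vector_right_distrib matrix_vector_mult_scaleR)
  then show ?thesis
    using assms(1,2) by (simp add: span_add span_scale)
qed

lemma skew_orthonormal_basis:
  fixes B :: "real^'n^'n"
  assumes skew_uv: "inner (B *v u) v \<noteq> inner (B *v v) u"
  obtains e1 e2 where "inner e1 e1 = 1" "inner e2 e2 = 1" "inner e1 e2 = 0"
    "span {e1, e2} = span {u, v}" "inner (B *v e1) e2 \<noteq> inner (B *v e2) e1"
proof -
  define skew where "skew x y = inner (B *v x) y - inner (B *v y) x" for x y
  have "u \<noteq> 0"
    using skew_uv by auto
  define e1 where "e1 = u /\<^sub>R norm u"
  define w where "w = v - inner v e1 *\<^sub>R e1"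
  define e2 where "e2 = w /\<^sub>R norm w"
  have "skew u w = skew u v"
    by (simp add: w_def e1_def skew_def inner_diff_left inner_diff_right algebra_simps inner_commute
        matrix_vector_mult_scaleR)
  then have "w \<noteq> 0"
    using skew_uv by (auto simp: skew_def)
  have "inner e1 e1 = 1"
    using \<open>u \<noteq> 0\<close> by (simp add: e1_def dot_square_norm power2_eq_square)
  moreover have "inner e2 e2 = 1"
    using \<open>w \<noteq> 0\<close> by (simp add: e2_def dot_square_norm power2_eq_square)
  moreover have "inner e1 e2 = 0"
    using \<open>inner e1 e1 = 1\<close> by (simp add: e2_def w_def inner_diff_right inner_commute)
  moreover have "span {e1, e2} = span {u, v}"
  proof -
    have u_eq: "u = norm u *\<^sub>R e1" and v_eq: "v = inner v e1 *\<^sub>R e1 + norm w *\<^sub>R e2"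
      using \<open>u \<noteq> 0\<close> \<open>w \<noteq> 0\<close> by (simp_all add: e1_def e2_def w_def)
    have "u \<in> span {e1, e2}"
      by (subst u_eq) (simp add: span_base span_scale)
    moreover have "v \<in> span {e1, e2}"
      by (subst v_eq) (simp add: span_base span_scale span_add)
    moreover have "e1 \<in> span {u, v}" and "e2 \<in> span {u, v}"
      by (simp_all add: e1_def e2_def w_def span_base span_scale span_diff)
    ultimately show ?thesis
      by (simp add: span_eq)
  qed
  moreover have "skew e1 e2 \<noteq> 0"
  proof -
    have "skew e1 e2 = skew u w / (norm u * norm w)"
      by (simp add: e1_def e2_def skew_def divide_inverse algebra_simps)
    then show ?thesis
      using skew_uv \<open>skew u w = skew u v\<close> \<open>u \<noteq> 0\<close> \<open>w \<noteq> 0\<close> by (simp add: skew_def)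
  qed
  ultimately show ?thesis
    using that by (simp add: skew_def)
qed

lemma rotation_plane_orthonormal_basis:
  fixes B :: "real^'n^'n"
  assumes Bu: "B *v u = a *\<^sub>R u - b *\<^sub>R v" and Bv: "B *v v = b *\<^sub>R u + a *\<^sub>R v"
    and "b \<noteq> 0" and "u \<noteq> 0 \<or> v \<noteq> 0"
  obtains e1 e2 where "inner e1 e1 = 1" "inner e2 e2 = 1" "inner e1 e2 = 0"
    "B *v e1 \<in> span {e1, e2}" "B *v e2 \<in> span {e1, e2}"
    "inner (B *v e1) e2 \<noteq> inner (B *v e2) e1"
proof -
  have "inner (B *v u) v - inner (B *v v) u = - b * (inner u u + inner v v)"
    by (simp add: Bu Bv algebra_simps inner_commute)
  moreover have "0 < inner u u + inner v v"
    using assms(4) by (metis add_nonneg_pos add_pos_nonneg inner_ge_zero inner_gt_zero_iff)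
  ultimately have "inner (B *v u) v \<noteq> inner (B *v v) u"
    using \<open>b \<noteq> 0\<close> by auto
  then obtain e1 e2 where basis: "inner e1 e1 = 1" "inner e2 e2 = 1" "inner e1 e2 = 0"
    "span {e1, e2} = span {u, v}" "inner (B *v e1) e2 \<noteq> inner (B *v e2) e1"
    by (rule skew_orthonormal_basis)
  have "B *v u \<in> span {u, v}" and "B *v v \<in> span {u, v}"
    unfolding Bu Bv by (simp_all add: span_base span_scale span_add span_diff)
  moreover have "e1 \<in> span {u, v}" and "e2 \<in> span {u, v}"
    unfolding basis(4)[symmetric] by (simp_all add: span_base)
  ultimately have "B *v e1 \<in> span {e1, e2}" and "B *v e2 \<in> span {e1, e2}"
    unfolding basis(4) by (simp_all add: span_pair_invariant)
  with basis that show ?thesis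
    by blast
qed

lemma pos_def_skew_normal_basis:
  fixes A :: "real^'n^'n"
  assumes pos_def: "\<And>z. z \<noteq> 0 \<Longrightarrow> 0 < inner z (A *v z)"
    and skew: "inner x (A *v y) \<noteq> inner y (A *v x)"
  obtains f1 f2 \<kappa> where "f1 \<in> span {x, y}" "f2 \<in> span {x, y}"
    "inner f1 (A *v f1) = 1" "inner f2 (A *v f2) = 1"
    "inner f1 (A *v f2) = \<kappa>" "inner f2 (A *v f1) = - \<kappa>" "\<kappa> \<noteq> 0"
proof -
  let ?Q = "\<lambda>z. inner z (A *v z)"
  have "x \<noteq> 0"
    using skew by auto
  then have "0 < ?Q x"
    by (rule pos_def)
  \<comment> \<open>Gram--Schmidt with respect to the symmetric part of the form\<close>
  define g where "g = y - ((inner x (A *v y) + inner y (A *v x)) / (2 * ?Q x)) *\<^sub>R x"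
  have g_sym: "inner x (A *v g) + inner g (A *v x) = 0"
    using \<open>0 < ?Q x\<close> by (simp add: g_def inner_diff_left inner_diff_right algebra_simps) (simp add: field_simps)
  have g_skew: "inner x (A *v g) - inner g (A *v x) = inner x (A *v y) - inner y (A *v x)"
    by (simp add: g_def inner_diff_left inner_diff_right algebra_simps)
  then have "g \<noteq> 0"
    using skew by auto
  then have "0 < ?Q g"
    by (rule pos_def)
  define f1 where "f1 = x /\<^sub>R sqrt (?Q x)"
  define f2 where "f2 = g /\<^sub>R sqrt (?Q g)"
  have f12: "inner f1 (A *v f2) = inner x (A *v g) / (sqrt (?Q x) * sqrt (?Q g))"
    and f21: "inner f2 (A *v f1) = inner g (A *v x) / (sqrt (?Q x) * sqrt (?Q g))"
    by (simp_all add: f1_def f2_def matrix_vector_mult_scaleR divide_inverse mult_ac)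
  have "inner x (A *v g) \<noteq> 0"
    using g_sym g_skew skew by auto
  then have "inner f1 (A *v f2) \<noteq> 0"
    using f12 \<open>0 < ?Q x\<close> \<open>0 < ?Q g\<close> by simp
  moreover have "inner f2 (A *v f1) = - inner f1 (A *v f2)"
    using g_sym by (simp add: f12 f21 eq_neg_iff_add_eq_0 add_divide_distrib[symmetric] add.commute)
  moreover have "f1 \<in> span {x, y}" "f2 \<in> span {x, y}"
    by (simp_all add: f1_def f2_def g_def span_base span_scale span_diff)
  moreover have "?Q f1 = 1" "?Q f2 = 1"
    using \<open>0 < ?Q x\<close> \<open>0 < ?Q g\<close>
    by (simp_all add: f1_def f2_def matrix_vector_mult_scaleR field_simps)
  ultimately show ?thesis
    using that by blast
qed

lemma proportional_pair:
  fixes a1 a2 g1 g2 :: real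
  assumes "g2 * a1 = g1 * a2" and "g1 \<noteq> 0 \<or> g2 \<noteq> 0"
  obtains c where "a1 = c * g1" and "a2 = c * g2"
proof (cases "g1 = 0")
  case True
  then show ?thesis
    using assms that[of "a2 / g2"] by simp
next
  case False
  then show ?thesis
    using assms that[of "a1 / g1"] by (simp add: field_simps)
qed

section \<open>The spiral approximator\<close>

definition td_trajectory :: "real^'n^'n \<Rightarrow> real^'n \<Rightarrow> (real^'d \<Rightarrow> real^'n)
    \<Rightarrow> (real^'d \<Rightarrow> real^'d \<Rightarrow> real^'n) \<Rightarrow> (real \<Rightarrow> real^'d) \<Rightarrow> bool" where
  "td_trajectory A Vs V V' \<theta> \<longleftrightarrow>
     (\<forall>t\<ge>0. (\<theta> has_vector_derivative td_field A Vs V V' (\<theta> t)) (at t within {0..}))"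

definition td_diverges :: "real^'n^'n \<Rightarrow> real^'n \<Rightarrow> (real^'d \<Rightarrow> real^'n)
    \<Rightarrow> (real^'d \<Rightarrow> real^'d \<Rightarrow> real^'n) \<Rightarrow> bool" where
  "td_diverges A Vs V V' \<longleftrightarrow>
     (\<forall>\<theta>0. \<exists>\<theta>. \<theta> 0 = \<theta>0 \<and> td_trajectory A Vs V V' \<theta>) \<and>
     (\<forall>\<theta>. td_trajectory A Vs V V' \<theta> \<longrightarrow> filterlim (\<lambda>t. norm (V (\<theta> t) - Vs)) at_top at_top)"

locale td_spiral =
  fixes A :: "real^'n^'n" and e1 e2 f1 f2 :: "real^'n" and \<kappa> :: real
  assumes e1_norm: "inner e1 e1 = 1" and e2_norm: "inner e2 e2 = 1" and e1_e2: "inner e1 e2 = 0"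
    and transpose_e1: "transpose A *v e1 \<in> span {e1, e2}"
    and transpose_e2: "transpose A *v e2 \<in> span {e1, e2}"
    and f1_plane: "f1 \<in> span {e1, e2}" and f2_plane: "f2 \<in> span {e1, e2}"
    and f1_form: "inner f1 (A *v f1) = 1" and f2_form: "inner f2 (A *v f2) = 1"
    and f1_f2_form: "inner f1 (A *v f2) = \<kappa>" and f2_f1_form: "inner f2 (A *v f1) = - \<kappa>"
    and kappa_nonzero: "\<kappa> \<noteq> 0"
begin

abbreviation plane :: "(real^'n) set" where
  "plane \<equiv> span {e1, e2}"

lemma plane_coordinates: "x \<in> plane \<Longrightarrow> x = inner e1 x *\<^sub>R e1 + inner e2 x *\<^sub>R e2"
  using e1_norm e2_norm e1_e2
  by (auto simp: span_pair_iff inner_add_right inner_commute[of e2 e1])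

definition proj_perp :: "real^'n \<Rightarrow> real^'n" where
  "proj_perp y = y - inner e1 y *\<^sub>R e1 - inner e2 y *\<^sub>R e2"

lemma inner_e1_proj_perp [simp]: "inner e1 (proj_perp y) = 0"
  and inner_e2_proj_perp [simp]: "inner e2 (proj_perp y) = 0"
  using e1_norm e2_norm e1_e2 by (simp_all add: proj_perp_def inner_diff_right inner_commute[of e2 e1])

lemma inner_plane_proj_perp: "x \<in> plane \<Longrightarrow> inner x (proj_perp y) = 0"
  by (subst plane_coordinates) (simp_all add: inner_add_left)

lemma inner_plane_A_proj_perp: "x \<in> plane \<Longrightarrow> inner x (A *v proj_perp y) = 0"
proof -
  assume "x \<in> plane"
  then have "transpose A *v x = inner e1 x *\<^sub>R (transpose A *v e1) + inner e2 x *\<^sub>R (transpose A *v e2)"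
    by (metis plane_coordinates matrix_vector_right_distrib matrix_vector_mult_scaleR)
  also have "\<dots> \<in> plane"
    using transpose_e1 transpose_e2 by (intro span_add span_scale)
  finally show ?thesis
    using inner_plane_proj_perp by (simp add: dot_lmul_matrix[symmetric])
qed

lemma proj_perp_plane: "x \<in> plane \<Longrightarrow> proj_perp x = 0"
  unfolding proj_perp_def by (metis plane_coordinates diff_diff_eq diff_self)

lemma linear_proj_perp: "linear proj_perp"
  by (rule linearI) (simp_all add: proj_perp_def algebra_simps inner_add_right)

lemma bounded_linear_proj_perp: "bounded_linear proj_perp"
  using linear_proj_perp by (simp add: linear_conv_bounded_linear)

lemma proj_perp_idem [simp]: "proj_perp (proj_perp y) = proj_perp y"
  by (simp add: proj_perp_def[of "proj_perp y"])

lemma inner_proj_perp_commute: "inner x (proj_perp y) = inner (proj_perp x) y"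
  by (simp add: proj_perp_def inner_diff_left inner_diff_right inner_commute algebra_simps)

lemma e1_plane: "e1 \<in> plane" and e2_plane: "e2 \<in> plane"
  by (simp_all add: span_base)

lemma form_f_coordinates:
  "inner (\<alpha> *\<^sub>R f1 + \<beta> *\<^sub>R f2) (A *v (\<gamma> *\<^sub>R f1 + \<delta> *\<^sub>R f2)) =
     \<alpha> * \<gamma> + \<beta> * \<delta> + \<kappa> * (\<alpha> * \<delta> - \<beta> * \<gamma>)"
  using f1_form f2_form f1_f2_form f2_f1_form
  by (simp add: matrix_vector_right_distrib matrix_vector_mult_scaleR inner_add_left inner_add_right
      algebra_simps)

text \<open>The angular speed \<open>spiral_angle'\<close> is chosen so that the rotation of the spiral outweighs
  its radial growth: \<open>spiral_deriv s \<bullet> (A *v spiral s) = exp (2 * s) * (1 - \<kappa> * spiral_angle' s) = -1\<close>.\<close>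
definition spiral_angle :: "real \<Rightarrow> real" where
  "spiral_angle s = (s - exp (- (2 * s)) / 2) / \<kappa>"

definition spiral_angle' :: "real \<Rightarrow> real" where
  "spiral_angle' s = (1 + exp (- (2 * s))) / \<kappa>"

definition spiral :: "real \<Rightarrow> real^'n" where
  "spiral s = exp s *\<^sub>R (cos (spiral_angle s) *\<^sub>R f1 + sin (spiral_angle s) *\<^sub>R f2)"

definition spiral_deriv :: "real \<Rightarrow> real^'n" where
  "spiral_deriv s = exp s *\<^sub>R
     ((cos (spiral_angle s) - spiral_angle' s * sin (spiral_angle s)) *\<^sub>R f1 +
      (sin (spiral_angle s) + spiral_angle' s * cos (spiral_angle s)) *\<^sub>R f2)"

lemma spiral_has_vector_derivative: "(spiral has_vector_derivative spiral_deriv s) (at s)"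
proof -
  have "(spiral_angle has_real_derivative spiral_angle' s) (at s)"
    unfolding spiral_angle_def spiral_angle'_def using kappa_nonzero
    by (auto intro!: derivative_eq_intros simp: field_simps)
  then show ?thesis
    unfolding spiral_def[abs_def] spiral_deriv_def
    by (auto intro!: derivative_eq_intros
        simp: has_real_derivative_iff_has_vector_derivative[symmetric] algebra_simps)
qed

lemma spiral_plane: "spiral s \<in> plane"
  and spiral_deriv_plane: "spiral_deriv s \<in> plane"
  unfolding spiral_def spiral_deriv_def
  by (intro span_scale span_add f1_plane f2_plane)+

lemma spiral_form: "inner (spiral s) (A *v spiral s) = exp s * exp s"
proof -
  have "inner (spiral s) (A *v spiral s) = exp s * exp s * ((cos (spiral_angle s))\<^sup>2 + (sin (spiral_angle s))\<^sup>2)"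
    unfolding spiral_def
    by (simp only: inner_scaleR_left inner_scaleR_right matrix_vector_mult_scaleR form_f_coordinates)
       (simp add: power2_eq_square algebra_simps)
  then show ?thesis by simp
qed

lemma spiral_deriv_form: "inner (spiral_deriv s) (A *v spiral s) = -1"
proof -
  let ?\<phi> = "spiral_angle s"
  have sin_sq: "sin ?\<phi> * sin ?\<phi> = 1 - cos ?\<phi> * cos ?\<phi>"
    by (simp add: sin_squared_eq flip: power2_eq_square)
  have "inner (spiral_deriv s) (A *v spiral s) = exp s * exp s * (1 - \<kappa> * spiral_angle' s)"
    unfolding spiral_def spiral_deriv_def
    by (simp only: inner_scaleR_left inner_scaleR_right matrix_vector_mult_scaleR form_f_coordinates)
       (simp add: algebra_simps sin_sq)
  also have "\<dots> = - (exp s * exp s * exp (- (2 * s)))"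
    using kappa_nonzero by (simp add: spiral_angle'_def)
  also have "\<dots> = -1"
    by (simp flip: exp_add)
  finally show ?thesis .
qed

lemma spiral_deriv_nonzero: "spiral_deriv s \<noteq> 0"
  using spiral_deriv_form[of s] by auto

lemma continuous_on_spiral: "continuous_on S spiral"
  using has_vector_derivative_continuous[OF spiral_has_vector_derivative]
  by (simp add: continuous_at_imp_continuous_on)

definition spiral_approx :: "real^'n \<Rightarrow> real^'n \<Rightarrow> real^'n" where
  "spiral_approx Vs y = Vs + spiral (inner e1 y) + proj_perp y"

definition spiral_approx_deriv :: "real^'n \<Rightarrow> real^'n \<Rightarrow> real^'n" where
  "spiral_approx_deriv y h = inner e1 h *\<^sub>R spiral_deriv (inner e1 y) + proj_perp h"

lemma linear_spiral_approx_deriv: "linear (spiral_approx_deriv y)"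
  by (rule linearI)
     (simp_all add: spiral_approx_deriv_def linear_add[OF linear_proj_perp]
       linear_scale[OF linear_proj_perp] inner_add_right algebra_simps)

lemma spiral_approx_has_derivative: "(spiral_approx Vs has_derivative spiral_approx_deriv y) (at y)"
proof -
  have "((\<lambda>y. spiral (inner e1 y)) has_derivative (\<lambda>h. inner e1 h *\<^sub>R spiral_deriv (inner e1 y))) (at y)"
    using has_derivative_compose[OF bounded_linear_imp_has_derivative[OF bounded_linear_inner_right]
        spiral_has_vector_derivative[unfolded has_vector_derivative_def]] .
  then show ?thesis
    unfolding spiral_approx_def[abs_def] spiral_approx_deriv_def[abs_def]
    by (auto intro!: derivative_eq_intros linear_imp_has_derivative[OF linear_proj_perp])
qed

definition spiral_normal :: "real \<Rightarrow> real^'n" where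
  "spiral_normal s = inner e2 (spiral_deriv s) *\<^sub>R e1 - inner e1 (spiral_deriv s) *\<^sub>R e2"

lemma spiral_deriv_coordinates_nonzero:
  "inner e1 (spiral_deriv s) \<noteq> 0 \<or> inner e2 (spiral_deriv s) \<noteq> 0"
proof (rule ccontr)
  assume "\<not> ?thesis"
  then have "spiral_deriv s = 0"
    by (subst plane_coordinates[OF spiral_deriv_plane]) simp
  then show False
    using spiral_deriv_nonzero by blast
qed

lemma inner_e1_spiral_normal: "inner e1 (spiral_normal s) = inner e2 (spiral_deriv s)"
  and inner_e2_spiral_normal: "inner e2 (spiral_normal s) = - inner e1 (spiral_deriv s)"
  using e1_norm e2_norm e1_e2
  by (simp_all add: spiral_normal_def inner_diff_right inner_commute[of e2 e1])

lemma spiral_normal_nonzero: "spiral_normal s \<noteq> 0"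
  using spiral_deriv_coordinates_nonzero[of s] inner_e1_spiral_normal[of s] inner_e2_spiral_normal[of s]
  by auto

lemma range_spiral_approx_deriv:
  "range (spiral_approx_deriv y) = {z. inner (spiral_normal (inner e1 y)) z = 0}"
proof (intro equalityI subsetI)
  let ?s = "inner e1 y"
  have normal_plane: "spiral_normal ?s \<in> plane"
    unfolding spiral_normal_def by (intro span_diff span_scale e1_plane e2_plane)
  fix z
  assume "z \<in> range (spiral_approx_deriv y)"
  then obtain h where "z = spiral_approx_deriv y h" by blast
  moreover have "inner (spiral_normal ?s) (spiral_deriv ?s) = 0"
    by (simp add: spiral_normal_def inner_diff_right inner_commute)
  ultimately show "z \<in> {z. inner (spiral_normal ?s) z = 0}"
    using inner_plane_proj_perp[OF normal_plane]
    by (simp add: spiral_approx_deriv_def inner_add_right)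
next
  let ?s = "inner e1 y"
  let ?g1 = "inner e1 (spiral_deriv ?s)" and ?g2 = "inner e2 (spiral_deriv ?s)"
  fix z
  assume "z \<in> {z. inner (spiral_normal ?s) z = 0}"
  then have "?g2 * inner e1 z = ?g1 * inner e2 z"
    by (simp add: spiral_normal_def inner_diff_left)
  moreover have "?g1 \<noteq> 0 \<or> ?g2 \<noteq> 0"
    by (rule spiral_deriv_coordinates_nonzero)
  ultimately obtain c where c: "inner e1 z = c * ?g1" "inner e2 z = c * ?g2"
    by (rule proportional_pair)
  have "spiral_approx_deriv y (c *\<^sub>R e1 + proj_perp z) = c *\<^sub>R spiral_deriv ?s + proj_perp z"
    using e1_norm proj_perp_plane[OF e1_plane]
    by (simp add: spiral_approx_deriv_def inner_add_right linear_add[OF linear_proj_perp]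
        linear_scale[OF linear_proj_perp])
  also have "\<dots> = z"
    by (subst plane_coordinates[OF spiral_deriv_plane])
       (simp add: proj_perp_def c algebra_simps)
  finally show "z \<in> range (spiral_approx_deriv y)"
    by (metis rangeI)
qed

lemma rank_spiral_approx_deriv: "rank (matrix (spiral_approx_deriv y)) = CARD('n) - 1"
  using dim_hyperplane[OF spiral_normal_nonzero]
  by (simp add: rank_dim_range linear_spiral_approx_deriv range_spiral_approx_deriv)

lemma td_field_spiral_approx:
  "td_field A Vs (spiral_approx Vs) spiral_approx_deriv y = e1 - proj_perp (A *v (spiral_approx Vs y - Vs))"
proof -
  let ?s = "inner e1 y" and ?a = "A *v (spiral_approx Vs y - Vs)"
  have "adjoint (spiral_approx_deriv y) = (\<lambda>a. inner (spiral_deriv ?s) a *\<^sub>R e1 + proj_perp a)"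
    by (intro adjoint_unique allI)
       (simp add: spiral_approx_deriv_def inner_add_left inner_add_right inner_commute[of e1]
         inner_proj_perp_commute)
  moreover have "transpose (matrix (spiral_approx_deriv y)) *v a = adjoint (spiral_approx_deriv y) a" for a
    by (metis matrix_adjoint[OF linear_spiral_approx_deriv]
        matrix_vector_mul(2)[OF adjoint_linear[OF linear_spiral_approx_deriv]])
  moreover have "inner (spiral_deriv ?s) ?a = -1"
    using spiral_deriv_form inner_plane_A_proj_perp[OF spiral_deriv_plane]
    by (simp add: spiral_approx_def matrix_vector_right_distrib inner_add_right)
  ultimately show ?thesis
    unfolding td_field_def by simp
qed

lemma td_trajectory_spiral_approx_speed:
  assumes "td_trajectory A Vs (spiral_approx Vs) spiral_approx_deriv y" and "0 \<le> t"
  shows "inner e1 (y t) = inner e1 (y 0) + t"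
proof -
  have "((\<lambda>t. inner e1 (y t)) has_vector_derivative 1) (at t within {0..})" if "0 \<le> t" for t
    using bounded_linear.has_vector_derivative[OF bounded_linear_inner_right[of e1],
        OF assms(1)[unfolded td_trajectory_def, rule_format, OF that]]
    by (simp add: td_field_spiral_approx inner_diff_right e1_norm)
  from has_vector_derivative_const_imp_affine[OF this assms(2)] show ?thesis
    by simp
qed

lemma norm_spiral_lower_bound:
  obtains c where "0 < c" and "\<And>s. c * exp s \<le> norm (spiral s)"
proof -
  obtain L where L: "0 < L" "\<And>x. norm (A *v x) \<le> L * norm x"
    using linear_bounded_pos[OF matrix_vector_mul_linear[of A]] by blast
  have "exp s / sqrt L \<le> norm (spiral s)" for s
  proof -
    have "(exp s)\<^sup>2 = inner (spiral s) (A *v spiral s)"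
      by (simp add: spiral_form power2_eq_square)
    also have "\<dots> \<le> norm (spiral s) * norm (A *v spiral s)"
      by (rule norm_cauchy_schwarz)
    also have "\<dots> \<le> norm (spiral s) * (L * norm (spiral s))"
      by (intro mult_left_mono L(2) norm_ge_zero)
    also have "\<dots> = (sqrt L * norm (spiral s))\<^sup>2"
      using L(1) by (simp add: power_mult_distrib power2_eq_square)
    finally have "exp s \<le> sqrt L * norm (spiral s)"
      by (rule power2_le_imp_le) (use L(1) in simp)
    then show ?thesis
      using L(1) by (simp add: field_simps)
  qed
  then show ?thesis
    using that[of "1 / sqrt L"] L(1) by simp
qed

lemma td_trajectory_spiral_approx_diverges:
  assumes "td_trajectory A Vs (spiral_approx Vs) spiral_approx_deriv y"
  shows "filterlim (\<lambda>t. norm (spiral_approx Vs (y t) - Vs)) at_top at_top"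
proof -
  obtain c where "0 < c" and c: "\<And>s. c * exp s \<le> norm (spiral s)"
    using norm_spiral_lower_bound by blast
  define s0 where "s0 = inner e1 (y 0)"
  have lower: "c * exp s0 * exp t \<le> norm (spiral_approx Vs (y t) - Vs)" if "0 \<le> t" for t
  proof -
    have "c * exp s0 * exp t \<le> norm (spiral (s0 + t))"
      using c[of "s0 + t"] by (simp add: exp_add mult.assoc)
    also have "\<dots> \<le> norm (spiral (s0 + t) + proj_perp (y t))"
    proof (rule power2_le_imp_le)
      show "(norm (spiral (s0 + t)))\<^sup>2 \<le> (norm (spiral (s0 + t) + proj_perp (y t)))\<^sup>2"
        using norm_add_Pythagorean[of "spiral (s0 + t)" "proj_perp (y t)"]
          inner_plane_proj_perp[OF spiral_plane] by (simp add: orthogonal_def)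
    qed simp
    also have "\<dots> = norm (spiral_approx Vs (y t) - Vs)"
      using td_trajectory_spiral_approx_speed[OF assms that] by (simp add: spiral_approx_def s0_def)
    finally show ?thesis .
  qed
  have "filterlim (\<lambda>t. c * exp s0 * exp t) at_top at_top"
    using \<open>0 < c\<close> by (intro filterlim_tendsto_pos_mult_at_top[OF tendsto_const _ exp_at_top]) simp
  then show ?thesis
    by (rule filterlim_at_top_mono) (use lower in \<open>auto simp: eventually_at_top_linorder\<close>)
qed

lemma td_trajectory_spiral_approx_exists:
  "\<exists>y. y 0 = y0 \<and> td_trajectory A Vs (spiral_approx Vs) spiral_approx_deriv y"
proof -
  define s0 where "s0 = inner e1 y0"
  define K where "K y = - proj_perp (A *v proj_perp y)" for y
  define f where "f t = e1 - proj_perp (A *v spiral (s0 + t))" for t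
  have proj_perp_A: "bounded_linear (\<lambda>x. proj_perp (A *v x))"
    using bounded_linear_compose[OF bounded_linear_proj_perp matrix_vector_mul_bounded_linear] .
  have K: "bounded_linear K"
    unfolding K_def
    by (intro bounded_linear_minus bounded_linear_compose[OF proj_perp_A bounded_linear_proj_perp])
  have "continuous_on UNIV (\<lambda>t. spiral (s0 + t))"
    by (rule continuous_on_compose2[OF continuous_on_spiral]) (auto intro: continuous_intros)
  then have f: "continuous_on UNIV f"
    unfolding f_def
    by (intro continuous_on_diff continuous_on_const bounded_linear.continuous_on[OF proj_perp_A])
  obtain y where "y 0 = y0"
    and y: "\<And>t. 0 \<le> t \<Longrightarrow> (y has_vector_derivative K (y t) + f t) (at t within {0..})"
    using linear_ode_solution_exists[OF K f, of y0] by blast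
  have speed: "inner e1 (y t) = s0 + t" if "0 \<le> t" for t
  proof -
    have "((\<lambda>t. inner e1 (y t)) has_vector_derivative 1) (at t within {0..})" if "0 \<le> t" for t
      using bounded_linear.has_vector_derivative[OF bounded_linear_inner_right[of e1] y[OF that]]
      by (simp add: K_def f_def inner_add_right inner_diff_right e1_norm)
    from has_vector_derivative_const_imp_affine[OF this that] show ?thesis
      using \<open>y 0 = y0\<close> by (simp add: s0_def)
  qed
  have "K (y t) + f t = td_field A Vs (spiral_approx Vs) spiral_approx_deriv (y t)" if "0 \<le> t" for t
    by (simp add: td_field_spiral_approx spiral_approx_def speed[OF that] K_def f_def
        matrix_vector_right_distrib linear_add[OF linear_proj_perp])
  then show ?thesis
    using \<open>y 0 = y0\<close> y by (auto simp: td_trajectory_def)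
qed

lemma td_diverges_spiral_approx: "td_diverges A Vs (spiral_approx Vs) spiral_approx_deriv"
  using td_trajectory_spiral_approx_exists td_trajectory_spiral_approx_diverges
  by (auto simp: td_diverges_def)

end

section \<open>Reparametrisation and the theorem\<close>

lemma exists_row_orthonormal_matrix:
  assumes "CARD('n) \<le> CARD('d)"
  obtains M :: "real^'d^'n" where "M ** transpose M = mat 1"
proof -
  obtain \<iota> :: "'n \<Rightarrow> 'd" where "inj \<iota>"
    using card_le_inj[of "UNIV :: 'n set" "UNIV :: 'd set"] assms by auto
  define M :: "real^'d^'n" where "M = (\<chi> j i. if i = \<iota> j then 1 else 0)"
  have "(M ** transpose M) $ j $ k = mat 1 $ j $ k" for j k
    using \<open>inj \<iota>\<close>
    by (simp add: M_def matrix_matrix_mult_def transpose_def mat_def if_distrib[where f="\<lambda>a. a * _"]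
        inj_eq cong: if_cong)
  then show ?thesis
    using that[of M] by (simp add: vec_eq_iff)
qed

context
  fixes M :: "real^'d^'p" and V :: "real^'p \<Rightarrow> real^'n" and V' :: "real^'p \<Rightarrow> real^'p \<Rightarrow> real^'n"
  assumes M: "M ** transpose M = mat 1" and linear_V': "\<And>y. linear (V' y)"
begin

lemma td_field_reparam:
  "td_field A Vs (\<lambda>\<theta>. V (M *v \<theta>)) (\<lambda>\<theta> h. V' (M *v \<theta>) (M *v h)) \<theta> =
     transpose M *v td_field A Vs V V' (M *v \<theta>)"
proof -
  have "matrix (\<lambda>h. V' (M *v \<theta>) (M *v h)) = matrix (V' (M *v \<theta>)) ** M"
    using matrix_compose[OF matrix_vector_mul_linear[of M] linear_V'] by (simp add: o_def)
  then show ?thesis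
    by (simp add: td_field_def matrix_transpose_mul matrix_vector_mul_assoc[symmetric]
        linear_neg[OF matrix_vector_mul_linear] del: transpose_matrix_vector)
qed

lemma row_orthonormal_cancel [simp]: "M *v (transpose M *v x) = x"
  by (simp add: matrix_vector_mul_assoc M del: transpose_matrix_vector)

lemma td_trajectory_reparam_project:
  assumes "td_trajectory A Vs (\<lambda>\<theta>. V (M *v \<theta>)) (\<lambda>\<theta> h. V' (M *v \<theta>) (M *v h)) \<theta>"
  shows "td_trajectory A Vs V V' (\<lambda>t. M *v \<theta> t)"
  unfolding td_trajectory_def
proof (intro allI impI)
  fix t :: real
  assume "0 \<le> t"
  then have "(\<theta> has_vector_derivative transpose M *v td_field A Vs V V' (M *v \<theta> t)) (at t within {0..})"
    using assms by (simp add: td_trajectory_def td_field_reparam del: transpose_matrix_vector)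
  from bounded_linear.has_vector_derivative[OF matrix_vector_mul_bounded_linear[of M] this]
  show "((\<lambda>t. M *v \<theta> t) has_vector_derivative td_field A Vs V V' (M *v \<theta> t)) (at t within {0..})"
    by (simp del: transpose_matrix_vector)
qed

lemma td_trajectory_reparam_lift:
  assumes "td_trajectory A Vs V V' y"
  shows "td_trajectory A Vs (\<lambda>\<theta>. V (M *v \<theta>)) (\<lambda>\<theta> h. V' (M *v \<theta>) (M *v h))
           (\<lambda>t. \<theta>0 + transpose M *v (y t - M *v \<theta>0))"
  unfolding td_trajectory_def td_field_reparam
proof (intro allI impI)
  fix t :: real
  assume "0 \<le> t"
  have "((\<lambda>t. \<theta>0 + transpose M *v (y t - M *v \<theta>0)) has_vector_derivative
      0 + transpose M *v (td_field A Vs V V' (y t) - 0)) (at t within {0..})"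
    using assms \<open>0 \<le> t\<close> unfolding td_trajectory_def
    by (intro derivative_intros bounded_linear.has_vector_derivative[OF matrix_vector_mul_bounded_linear]) auto
  then show "((\<lambda>t. \<theta>0 + transpose M *v (y t - M *v \<theta>0)) has_vector_derivative
      transpose M *v td_field A Vs V V' (M *v (\<theta>0 + transpose M *v (y t - M *v \<theta>0)))) (at t within {0..})"
    by (simp add: matrix_vector_right_distrib del: transpose_matrix_vector)
qed

lemma td_diverges_reparam:
  assumes "td_diverges A Vs V V'"
  shows "td_diverges A Vs (\<lambda>\<theta>. V (M *v \<theta>)) (\<lambda>\<theta> h. V' (M *v \<theta>) (M *v h))"
  unfolding td_diverges_def
proof (intro conjI allI impI)
  fix \<theta>0
  obtain y where "y 0 = M *v \<theta>0" and "td_trajectory A Vs V V' y"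
    using assms by (auto simp: td_diverges_def)
  then show "\<exists>\<theta>. \<theta> 0 = \<theta>0 \<and> td_trajectory A Vs (\<lambda>\<theta>. V (M *v \<theta>)) (\<lambda>\<theta> h. V' (M *v \<theta>) (M *v h)) \<theta>"
    by (intro exI[of _ "\<lambda>t. \<theta>0 + transpose M *v (y t - M *v \<theta>0)"] conjI td_trajectory_reparam_lift) simp_all
next
  fix \<theta>
  assume "td_trajectory A Vs (\<lambda>\<theta>. V (M *v \<theta>)) (\<lambda>\<theta> h. V' (M *v \<theta>) (M *v h)) \<theta>"
  then show "filterlim (\<lambda>t. norm (V (M *v \<theta> t) - Vs)) at_top at_top"
    using assms td_trajectory_reparam_project by (auto simp: td_diverges_def)
qed

lemma rank_reparam: "rank (matrix (\<lambda>h. V' y (M *v h))) = rank (matrix (V' y))"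
proof -
  have "matrix (\<lambda>h. V' y (M *v h)) = matrix (V' y) ** M"
    using matrix_compose[OF matrix_vector_mul_linear[of M] linear_V'] by (simp add: o_def)
  moreover have "rank (matrix (V' y)) = rank (matrix (V' y) ** M ** transpose M)"
    by (simp add: matrix_mul_assoc[symmetric] M)
  ultimately show ?thesis
    by (metis rank_mul_le_left order.antisym)
qed

end

lemma divergent_td_approximator_exists:
  fixes A :: "real^'n^'n" and Vs :: "real^'n"
  assumes pos_def: "\<And>x. x \<noteq> 0 \<Longrightarrow> 0 < inner x (A *v x)"
    and "is_eigenvalue A c" and "Im c \<noteq> 0" and "CARD('n) \<le> CARD('d)"
  shows "\<exists>(V :: real^'d \<Rightarrow> real^'n) V'. (\<forall>\<theta>. (V has_derivative V' \<theta>) (at \<theta>)) \<and>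
           (\<forall>\<theta>. rank (matrix (V' \<theta>)) = CARD('n) - 1) \<and> td_diverges A Vs V V'"
proof -
  obtain u v where "transpose A *v u = Re c *\<^sub>R u - Im c *\<^sub>R v"
    and "transpose A *v v = Im c *\<^sub>R u + Re c *\<^sub>R v" and "u \<noteq> 0 \<or> v \<noteq> 0"
    using is_eigenvalue_real_plane assms(2) is_eigenvalue_transpose by metis
  then obtain e1 e2 where orthonormal: "inner e1 e1 = 1" "inner e2 e2 = 1" "inner e1 e2 = 0"
    and invariant: "transpose A *v e1 \<in> span {e1, e2}" "transpose A *v e2 \<in> span {e1, e2}"
    and skew: "inner (transpose A *v e1) e2 \<noteq> inner (transpose A *v e2) e1"
    using rotation_plane_orthonormal_basis assms(3) by metis
  obtain f1 f2 \<kappa> where "td_spiral A e1 e2 f1 f2 \<kappa>"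
    using pos_def_skew_normal_basis[OF pos_def, of e1 e2] skew orthonormal invariant
    by (simp add: td_spiral_def dot_lmul_matrix) metis
  then interpret td_spiral A e1 e2 f1 f2 \<kappa> .
  obtain M :: "real^'d^'n" where M: "M ** transpose M = mat 1"
    using exists_row_orthonormal_matrix assms(4) by blast
  have "((\<lambda>\<theta>. spiral_approx Vs (M *v \<theta>)) has_derivative (\<lambda>h. spiral_approx_deriv (M *v \<theta>) (M *v h))) (at \<theta>)" for \<theta>
    using has_derivative_compose[OF linear_imp_has_derivative[OF matrix_vector_mul_linear]
        spiral_approx_has_derivative] .
  then show ?thesis
    using td_diverges_reparam[OF M linear_spiral_approx_deriv td_diverges_spiral_approx]
      rank_reparam[OF M linear_spiral_approx_deriv] rank_spiral_approx_deriv
    by (intro exI[of _ "\<lambda>\<theta>. spiral_approx Vs (M *v \<theta>)"]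
        exI[of _ "\<lambda>\<theta> h. spiral_approx_deriv (M *v \<theta>) (M *v h)"]) auto
qed

theorem proposition1:
  fixes P :: "real^'n^'n" and \<mu> :: "real^'n" and r :: "'n \<Rightarrow> 'n \<Rightarrow> real"
    and \<gamma> :: real and Vstar :: "real^'n"
  assumes "stochastic P" and "irreducible_chain P" and "aperiodic_chain P"
    and "stationary_distribution P \<mu>"
    and "0 \<le> \<gamma>" and "\<gamma> < 1"
    and "Vstar = exp_reward P r + \<gamma> *s (P *v Vstar)"
    and "\<exists>c. Im c \<noteq> 0 \<and> is_eigenvalue (diag_mat \<mu> ** (mat 1 - \<gamma> *\<^sub>R P)) c"
    and "CARD('d::finite) \<ge> CARD('n)"
  shows "\<exists>(V :: real^'d \<Rightarrow> real^'n) V'.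
           (\<forall>\<theta>. (V has_derivative V' \<theta>) (at \<theta>)) \<and>
           (\<forall>\<theta>. rank (matrix (V' \<theta>)) = CARD('n) - 1) \<and>
           (\<forall>\<theta>0. (\<exists>\<theta>. \<theta> 0 = \<theta>0 \<and>
                    (\<forall>t\<ge>0. (\<theta> has_vector_derivative
                        td_field (diag_mat \<mu> ** (mat 1 - \<gamma> *\<^sub>R P)) Vstar V V' (\<theta> t))
                        (at t within {0..}))) \<and>
                  (\<forall>\<theta>. \<theta> 0 = \<theta>0 \<longrightarrow>
                    (\<forall>t\<ge>0. (\<theta> has_vector_derivative
                        td_field (diag_mat \<mu> ** (mat 1 - \<gamma> *\<^sub>R P)) Vstar V V' (\<theta> t))
                        (at t within {0..})) \<longrightarrow>
                    filterlim (\<lambda>t. norm (V (\<theta> t) - Vstar)) at_top at_top))"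
proof -
  obtain c where "Im c \<noteq> 0" and "is_eigenvalue (diag_mat \<mu> ** (mat 1 - \<gamma> *\<^sub>R P)) c"
    using assms(8) by blast
  with td_matrix_pos_def[OF assms(1,2,4,5,6)] assms(9)
  obtain V :: "real^'d \<Rightarrow> real^'n" and V' where "\<forall>\<theta>. (V has_derivative V' \<theta>) (at \<theta>)"
    and "\<forall>\<theta>. rank (matrix (V' \<theta>)) = CARD('n) - 1"
    and "td_diverges (diag_mat \<mu> ** (mat 1 - \<gamma> *\<^sub>R P)) Vstar V V'"
    using divergent_td_approximator_exists by metis
  then show ?thesis
    unfolding td_diverges_def td_trajectory_def by blast
qed

end
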